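(* Let $C\subseteq\mathbb{F}_2^n$ be a linear code, let $0\le p\le1$, and let $t=\log_2(1+p)$. Then \[ \log_2 \mathbb{E}_{S \sim p}\big(2^{|S| - r_C(S)}\big) ~\le~ \mathbb{E}_{T \sim t}\big(|T| - r_C(T)\big). \] Moreover, equality holds if $C$ is a subcube, i.e. $C=\{x\in\mathbb{F}_2^n: x_i=0 \text{ for all } i\notin K\}$ for some $K\subseteq[n]$.
   Context: Fix a generating matrix of $C$ (a matrix over $\mathbb{F}_2$ whose rows span $C$, with columns indexed by $[n]$). For $S\subseteq[n]$, $r_C(S)$ is the rank over $\mathbb{F}_2$ of the set of columns indexed by $S$ (the rank function of the binary matroid on $[n]$ defined by the generating matrix; it does not depend on the choice of generating matrix). For $0\le\lambda\le1$, $S\sim\lambda$ denotes a random subset of $[n]$ containing each element independently with probability $\lambda$. *)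

theory Defs
  imports Complex_Main "HOL-Library.Z2"
begin

text \<open>Vectors of \<open>F_2^n\<close> are functions \<open>nat \<Rightarrow> bit\<close> vanishing outside \<open>{..<n}\<close>.
  A generating matrix with \<open>k\<close> rows and \<open>n\<close> columns is a function
  \<open>G :: nat \<Rightarrow> nat \<Rightarrow> bit\<close>, where \<open>G i j\<close> is the entry in row \<open>i < k\<close>, column \<open>j < n\<close>
  (other values are irrelevant).\<close>

definition row_space :: "nat \<Rightarrow> nat \<Rightarrow> (nat \<Rightarrow> nat \<Rightarrow> bit) \<Rightarrow> (nat \<Rightarrow> bit) set" where
  "row_space k n G =
     {x. \<exists>c :: nat \<Rightarrow> bit. \<forall>j. x j = (if j < n then (\<Sum>i<k. c i * G i j) else 0)}"

definition cols_indep :: "nat \<Rightarrow> (nat \<Rightarrow> nat \<Rightarrow> bit) \<Rightarrow> nat set \<Rightarrow> bool" where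
  "cols_indep k G T \<longleftrightarrow>
     (\<forall>a :: nat \<Rightarrow> bit. (\<forall>i<k. (\<Sum>j\<in>T. a j * G i j) = 0) \<longrightarrow> (\<forall>j\<in>T. a j = 0))"

text \<open>Rank over \<open>F_2\<close> of the set of columns indexed by \<open>S\<close> (for finite \<open>S\<close>).\<close>
definition col_rank :: "nat \<Rightarrow> (nat \<Rightarrow> nat \<Rightarrow> bit) \<Rightarrow> nat set \<Rightarrow> nat" where
  "col_rank k G S = Max {card T | T. T \<subseteq> S \<and> cols_indep k G T}"

text \<open>Expectation over a random subset \<open>S \<sim> \<lambda>\<close> of \<open>[n] = {..<n}\<close>, each element
  included independently with probability \<open>\<lambda>\<close>.\<close>
definition subset_expect :: "nat \<Rightarrow> real \<Rightarrow> (nat set \<Rightarrow> real) \<Rightarrow> real" where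
  "subset_expect n lam f =
     (\<Sum>S\<in>Pow {..<n}. lam ^ card S * (1 - lam) ^ (n - card S) * f S)"

definition subcube :: "nat set \<Rightarrow> (nat \<Rightarrow> bit) set" where
  "subcube K = {x. \<forall>j. j \<notin> K \<longrightarrow> x j = 0}"

end

theory Submission
  imports Defs "HOL-Analysis.Convex"
begin

(* The function f(S) = |S| - r_C(S) has increments in [0, 1]: adding an element raises |S| by one
   and the rank by zero or one.  For any such f, induct on n by conditioning on whether the last
   element lies in S.  If a and b are the t-expectations of f over the remaining elements without
   and with it, then 0 <= b - a <= 1, and concavity of x |-> x^(b-a) applied to
   1 + p = (1 - p) * 1 + p * 2 gives
     (1 - p) 2^a + p 2^b <= 2^a (1 + p)^(b-a) = 2^((1 - t) a + t b),
   which closes the induction.  For a subcube with support K one has r_C(S) = |S \<inter> K|, so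
   f(S) = |S - K| and both sides equal |[n] - K| log_2 (1 + p). *)

lemma powr_concave:
  assumes "0 \<le> d" "d \<le> 1"
  shows "concave_on {0<..} (\<lambda>x::real. x powr d)"
proof (rule f''_le0_imp_concave)
  show "((\<lambda>x. x powr d) has_real_derivative d * x powr (d - 1)) (at x)" if "x \<in> {0<..}" for x
    using that by (auto intro!: derivative_eq_intros)
  show "((\<lambda>x. d * x powr (d - 1)) has_real_derivative d * ((d - 1) * x powr (d - 1 - 1))) (at x)"
    if "x \<in> {0<..}" for x
    using that by (auto intro!: derivative_eq_intros)
  show "d * ((d - 1) * x powr (d - 1 - 1)) \<le> 0" for x
    using assms by (simp add: mult_nonneg_nonpos mult_nonpos_nonneg)
qed simp

lemma mean_powr_le_powr_mean:
  fixes p b d :: real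
  assumes "0 \<le> p" "p \<le> 1" "0 < b" "0 \<le> d" "d \<le> 1"
  shows "1 - p + p * b powr d \<le> (1 - p + p * b) powr d"
  using concave_onD[OF powr_concave[OF assms(4,5)], of p 1 b] assms by simp

lemma convex_combination_powr2_le:
  fixes p a b :: real
  assumes "0 \<le> p" "p \<le> 1" "a \<le> b" "b \<le> a + 1"
  defines "t \<equiv> log 2 (1 + p)"
  shows "(1 - p) * 2 powr a + p * 2 powr b \<le> 2 powr ((1 - t) * a + t * b)"
proof -
  have "(1 - p) * 2 powr a + p * 2 powr b = 2 powr a * (1 - p + p * 2 powr (b - a))"
    by (simp add: algebra_simps powr_diff)
  also have "\<dots> \<le> 2 powr a * (1 + p) powr (b - a)"
    using mean_powr_le_powr_mean[of p 2 "b - a"] assms by (simp add: add.commute)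
  also have "(1 + p) powr (b - a) = 2 powr (t * (b - a))"
    using assms by (simp add: t_def flip: powr_powr)
  also have "2 powr a * 2 powr (t * (b - a)) = 2 powr ((1 - t) * a + t * b)"
    by (simp add: algebra_simps flip: powr_add)
  finally show ?thesis .
qed

lemma subset_expect_Suc:
  "subset_expect (Suc n) lam F =
     (1 - lam) * subset_expect n lam F + lam * subset_expect n lam (\<lambda>S. F (insert n S))"
proof -
  define w where "w S = lam ^ card S * (1 - lam) ^ (Suc n - card S) * F S" for S
  have card_le: "card S \<le> n" and card_insert: "card (insert n S) = Suc (card S)"
    if "S \<in> Pow {..<n}" for S
    using that card_mono[of "{..<n}" S] finite_subset[of S "{..<n}"] by (auto simp: subset_eq)
  have "subset_expect (Suc n) lam F = sum w (Pow {..<n}) + sum w (insert n ` Pow {..<n})"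
    unfolding subset_expect_def w_def lessThan_Suc Pow_insert
    by (rule sum.union_disjoint) auto
  also have "sum w (insert n ` Pow {..<n}) = (\<Sum>S\<in>Pow {..<n}. w (insert n S))"
    by (rule sum.reindex_cong[where l = "insert n"]) (auto intro!: inj_onI)
  finally show ?thesis
    unfolding subset_expect_def sum_distrib_left w_def
    by (auto simp: card_le card_insert Suc_diff_le intro!: arg_cong2[where f = "(+)"] sum.cong)
qed

lemma subset_expect_cong:
  "(\<And>S. S \<subseteq> {..<n} \<Longrightarrow> F S = F' S) \<Longrightarrow> subset_expect n lam F = subset_expect n lam F'"
  unfolding subset_expect_def by (rule sum.cong) auto

lemma subset_expect_const: "subset_expect n lam (\<lambda>_. c) = c"
  by (induction n) (simp_all add: subset_expect_Suc algebra_simps, simp add: subset_expect_def)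

lemma subset_expect_add:
  "subset_expect n lam (\<lambda>S. F S + F' S) = subset_expect n lam F + subset_expect n lam F'"
  unfolding subset_expect_def by (simp add: distrib_left sum.distrib)

lemma subset_expect_cmult: "subset_expect n lam (\<lambda>S. c * F S) = c * subset_expect n lam F"
  unfolding subset_expect_def sum_distrib_left by (simp add: mult.left_commute)

lemma subset_expect_mono:
  assumes "0 \<le> lam" "lam \<le> 1" "\<And>S. S \<subseteq> {..<n} \<Longrightarrow> F S \<le> F' S"
  shows "subset_expect n lam F \<le> subset_expect n lam F'"
  unfolding subset_expect_def using assms by (intro sum_mono mult_left_mono) auto

lemma subset_expect_pos:
  assumes "0 \<le> lam" "lam \<le> 1" "\<And>S. 0 < F S"
  shows "0 < subset_expect n lam F"
  using assms(3)
proof (induction n arbitrary: F)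
  case 0
  then show ?case by (simp add: subset_expect_def)
next
  case (Suc n)
  have F: "0 < subset_expect n lam F" and F_insert: "0 < subset_expect n lam (\<lambda>S. F (insert n S))"
    by (rule Suc.IH, rule Suc.prems)+
  show ?case
  proof (cases "lam = 1")
    case True
    then show ?thesis using F_insert unfolding subset_expect_Suc by simp
  next
    case False
    then have "0 < (1 - lam) * subset_expect n lam F" using F assms(2) by simp
    moreover have "0 \<le> lam * subset_expect n lam (\<lambda>S. F (insert n S))" using F_insert assms(1) by simp
    ultimately show ?thesis unfolding subset_expect_Suc by linarith
  qed
qed

definition unit_increments :: "nat \<Rightarrow> (nat set \<Rightarrow> real) \<Rightarrow> bool" where
  "unit_increments n f \<longleftrightarrow>
     (\<forall>S e. S \<subseteq> {..<n} \<longrightarrow> e < n \<longrightarrow> e \<notin> S \<longrightarrow> f S \<le> f (insert e S) \<and> f (insert e S) \<le> f S + 1)"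

lemma unit_increments_Suc:
  assumes "unit_increments (Suc n) f"
  shows "unit_increments n f" and "unit_increments n (\<lambda>S. f (insert n S))"
proof -
  show "unit_increments n f"
    unfolding unit_increments_def
  proof (intro allI impI)
    fix S e assume "S \<subseteq> {..<n}" "e < n" "e \<notin> S"
    then have "S \<subseteq> {..<Suc n}" "e < Suc n" "e \<notin> S" by auto
    then show "f S \<le> f (insert e S) \<and> f (insert e S) \<le> f S + 1"
      using assms unfolding unit_increments_def by blast
  qed
  show "unit_increments n (\<lambda>S. f (insert n S))"
    unfolding unit_increments_def
  proof (intro allI impI)
    fix S e assume "S \<subseteq> {..<n}" "e < n" "e \<notin> S"
    then have "insert n S \<subseteq> {..<Suc n}" "e < Suc n" "e \<notin> insert n S" by auto
    then show "f (insert n S) \<le> f (insert n (insert e S)) \<and> f (insert n (insert e S)) \<le> f (insert n S) + 1"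
      using assms unfolding unit_increments_def by (metis insert_commute)
  qed
qed

lemma subset_expect_powr_le:
  assumes "0 \<le> p" "p \<le> 1" "unit_increments n f"
  shows "subset_expect n p (\<lambda>S. 2 powr f S) \<le> 2 powr subset_expect n (log 2 (1 + p)) f"
  using assms(3)
proof (induction n arbitrary: f)
  case 0
  then show ?case by (simp add: subset_expect_def)
next
  case (Suc n)
  let ?t = "log 2 (1 + p)"
  define g where "g S = f (insert n S)" for S
  define a where "a = subset_expect n ?t f"
  define b where "b = subset_expect n ?t g"
  have t: "0 \<le> ?t" "?t \<le> 1" using assms by simp_all
  have incr: "f S \<le> g S" "g S \<le> f S + 1" if "S \<subseteq> {..<n}" for S
  proof -
    have "S \<subseteq> {..<Suc n}" "n \<notin> S" using that by auto
    then show "f S \<le> g S" "g S \<le> f S + 1"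
      using Suc.prems unfolding unit_increments_def g_def by auto
  qed
  have "a \<le> b" unfolding a_def b_def using t incr by (intro subset_expect_mono) auto
  moreover have "b \<le> a + 1"
    using subset_expect_mono[OF t, of n g "\<lambda>S. f S + 1"] incr
    unfolding a_def b_def subset_expect_add subset_expect_const by blast
  moreover note IH = Suc.IH[OF unit_increments_Suc(1)[OF Suc.prems]]
    Suc.IH[OF unit_increments_Suc(2)[OF Suc.prems], folded g_def]
  ultimately have "subset_expect (Suc n) p (\<lambda>S. 2 powr f S) \<le> (1 - p) * 2 powr a + p * 2 powr b"
    unfolding subset_expect_Suc g_def a_def b_def using assms(1,2)
    by (intro add_mono mult_left_mono) auto
  also have "\<dots> \<le> 2 powr ((1 - ?t) * a + ?t * b)"
    using convex_combination_powr2_le assms(1,2) \<open>a \<le> b\<close> \<open>b \<le> a + 1\<close> by blast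
  also have "(1 - ?t) * a + ?t * b = subset_expect (Suc n) ?t f"
    unfolding subset_expect_Suc a_def b_def g_def ..
  finally show ?case .
qed

lemma cols_indep_subset:
  assumes "cols_indep k G T" "T' \<subseteq> T" "finite T"
  shows "cols_indep k G T'"
  unfolding cols_indep_def
proof (intro allI impI)
  fix a :: "nat \<Rightarrow> bit"
  assume a: "\<forall>i<k. (\<Sum>j\<in>T'. a j * G i j) = 0"
  define a' where "a' j = (if j \<in> T' then a j else 0)" for j
  have "(\<Sum>j\<in>T. a' j * G i j) = (\<Sum>j\<in>T'. a j * G i j)" for i
    using assms(2,3) by (intro sum.mono_neutral_cong_right) (auto simp: a'_def)
  with a have "\<forall>i<k. (\<Sum>j\<in>T. a' j * G i j) = 0" by simp
  then have "\<forall>j\<in>T. a' j = 0"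
    using assms(1) unfolding cols_indep_def by blast
  then show "\<forall>j\<in>T'. a j = 0"
    using assms(2) unfolding a'_def by (metis subsetD)
qed

lemma finite_indep_cards: "finite S \<Longrightarrow> finite {card T | T. T \<subseteq> S \<and> cols_indep k G T}"
  by (rule finite_subset[where B = "card ` Pow S"]) auto

lemma card_le_col_rank: "finite S \<Longrightarrow> T \<subseteq> S \<Longrightarrow> cols_indep k G T \<Longrightarrow> card T \<le> col_rank k G S"
  unfolding col_rank_def by (rule Max_ge[OF finite_indep_cards]) blast+

lemma obtain_col_rank_basis:
  assumes "finite S"
  obtains T where "T \<subseteq> S" "cols_indep k G T" "card T = col_rank k G S"
proof -
  have "cols_indep k G {}" unfolding cols_indep_def by simp
  then have "{card T | T. T \<subseteq> S \<and> cols_indep k G T} \<noteq> {}" by auto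
  then have "col_rank k G S \<in> {card T | T. T \<subseteq> S \<and> cols_indep k G T}"
    unfolding col_rank_def by (rule Max_in[OF finite_indep_cards[OF assms]])
  then obtain T where "T \<subseteq> S" "cols_indep k G T" "col_rank k G S = card T" by auto
  then show ?thesis by (intro that) simp_all
qed

lemma col_rank_mono:
  assumes "finite S'" "S \<subseteq> S'"
  shows "col_rank k G S \<le> col_rank k G S'"
proof -
  obtain T where "T \<subseteq> S" "cols_indep k G T" "card T = col_rank k G S"
    using obtain_col_rank_basis finite_subset[OF assms(2,1)] by blast
  then show ?thesis using assms card_le_col_rank[of S' T] by auto
qed

lemma col_rank_insert_le:
  assumes "finite S"
  shows "col_rank k G (insert e S) \<le> col_rank k G S + 1"
proof -
  have "finite (insert e S)" using assms by simp
  then obtain T where T: "T \<subseteq> insert e S" "cols_indep k G T" "card T = col_rank k G (insert e S)"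
    by (rule obtain_col_rank_basis)
  have "finite T" using T(1) \<open>finite (insert e S)\<close> by (rule finite_subset)
  then have "cols_indep k G (T - {e})"
    using cols_indep_subset[OF T(2)] by blast
  then have "card (T - {e}) \<le> col_rank k G S"
    using T(1) assms by (intro card_le_col_rank) auto
  moreover have "card T \<le> card (T - {e}) + 1"
    by (simp add: card_Diff_singleton_if) arith
  ultimately show ?thesis using T(3) by simp
qed

lemma unit_increments_nullity: "unit_increments n (\<lambda>S. real (card S) - real (col_rank k G S))"
  unfolding unit_increments_def
proof (intro allI impI)
  fix S e assume S: "S \<subseteq> {..<n}" "e < n" "e \<notin> S"
  then have "finite S" by (meson finite_lessThan finite_subset)
  have "col_rank k G S \<le> col_rank k G (insert e S)"
    using \<open>finite S\<close> by (intro col_rank_mono) auto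
  moreover have "col_rank k G (insert e S) \<le> col_rank k G S + 1"
    using \<open>finite S\<close> by (rule col_rank_insert_le)
  moreover have "card (insert e S) = card S + 1"
    using \<open>finite S\<close> S(3) by simp
  ultimately show "real (card S) - real (col_rank k G S) \<le> real (card (insert e S)) - real (col_rank k G (insert e S))
    \<and> real (card (insert e S)) - real (col_rank k G (insert e S)) \<le> real (card S) - real (col_rank k G S) + 1"
    by linarith
qed

lemma sum_delta_mult:
  fixes f :: "'a \<Rightarrow> 'b::semiring_1"
  assumes "finite A" "a \<in> A"
  shows "(\<Sum>x\<in>A. (if x = a then 1 else 0) * f x) = f a"
proof -
  have "(\<Sum>x\<in>A. (if x = a then 1 else 0) * f x) = (\<Sum>x\<in>A. if x = a then f x else 0)"
    by (rule sum.cong) simp_all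
  then show ?thesis using assms by simp
qed

lemma not_cols_indep_zero_column:
  assumes "finite T" "j \<in> T" "\<And>i. i < k \<Longrightarrow> G i j = 0"
  shows "\<not> cols_indep k G T"
proof
  assume indep: "cols_indep k G T"
  define a where "a j' = (if j' = j then 1 else 0 :: bit)" for j'
  have "(\<Sum>j'\<in>T. a j' * G i j') = G i j" for i
    unfolding a_def using assms(1,2) by (rule sum_delta_mult)
  then have "\<forall>i<k. (\<Sum>j'\<in>T. a j' * G i j') = 0"
    using assms(3) by simp
  then have "a j = 0" using indep assms(2) unfolding cols_indep_def by blast
  then show False by (simp add: a_def)
qed

lemma cols_indep_if_isolating_combinations:
  assumes "finite T"
    and isolate: "\<And>j0. j0 \<in> T \<Longrightarrow> \<exists>c. \<forall>j\<in>T. (\<Sum>i<k. c i * G i j) = (if j = j0 then 1 else 0)"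
  shows "cols_indep k G T"
  unfolding cols_indep_def
proof (intro allI impI ballI)
  fix a :: "nat \<Rightarrow> bit" and j0
  assume a: "\<forall>i<k. (\<Sum>j\<in>T. a j * G i j) = 0" and "j0 \<in> T"
  then obtain c where c: "\<forall>j\<in>T. (\<Sum>i<k. c i * G i j) = (if j = j0 then 1 else 0)"
    using isolate by blast
  have "a j0 = (\<Sum>j\<in>T. if j = j0 then a j else 0)"
    using assms(1) \<open>j0 \<in> T\<close> by simp
  also have "\<dots> = (\<Sum>j\<in>T. a j * (\<Sum>i<k. c i * G i j))"
    using c by (intro sum.cong) auto
  also have "\<dots> = (\<Sum>i<k. c i * (\<Sum>j\<in>T. a j * G i j))"
    unfolding sum_distrib_left by (subst sum.swap) (simp only: mult.left_commute)
  also have "\<dots> = 0"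
    using a by simp
  finally show "a j0 = 0" .
qed

lemma row_space_subcube_zero_column:
  assumes "row_space k n G = subcube K" "j < n" "j \<notin> K" "i < k"
  shows "G i j = 0"
proof -
  define c where "c i' = (if i' = i then 1 else 0 :: bit)" for i'
  define x where "x j' = (if j' < n then (\<Sum>i'<k. c i' * G i' j') else 0)" for j'
  have "x \<in> row_space k n G"
    unfolding row_space_def x_def by blast
  then have "x j = 0"
    using assms(1,3) unfolding subcube_def by blast
  moreover have "x j = G i j"
    using assms(2,4) sum_delta_mult[of "{..<k}" i "\<lambda>i'. G i' j"] by (simp add: x_def c_def)
  ultimately show ?thesis by simp
qed

lemma row_space_subcube_unit_vector:
  assumes "row_space k n G = subcube K" "j0 \<in> K"
  shows "\<exists>c. \<forall>j<n. (\<Sum>i<k. c i * G i j) = (if j = j0 then 1 else 0)"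
proof -
  have "(\<lambda>j. if j = j0 then 1 else 0) \<in> row_space k n G"
    unfolding assms(1) subcube_def using assms(2) by auto
  then obtain c where c: "\<forall>j. (if j = j0 then 1 else 0) = (if j < n then (\<Sum>i<k. c i * G i j) else 0)"
    unfolding row_space_def by blast
  then have "\<forall>j<n. (\<Sum>i<k. c i * G i j) = (if j = j0 then 1 else 0)"
    by simp
  then show ?thesis by blast
qed

lemma col_rank_subcube:
  assumes K: "row_space k n G = subcube K" and S: "S \<subseteq> {..<n}"
  shows "col_rank k G S = card (S \<inter> K)"
proof (rule antisym)
  have "finite S" using S by (rule finite_subset) simp
  obtain T where T: "T \<subseteq> S" "cols_indep k G T" "card T = col_rank k G S"
    using \<open>finite S\<close> by (rule obtain_col_rank_basis)
  have "T \<subseteq> K"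
  proof
    fix j assume "j \<in> T"
    show "j \<in> K"
    proof (rule ccontr)
      assume "j \<notin> K"
      have "j < n" using \<open>j \<in> T\<close> T(1) S by blast
      have "finite T" using T(1) \<open>finite S\<close> by (rule finite_subset)
      then have "\<not> cols_indep k G T"
        using \<open>j \<in> T\<close> row_space_subcube_zero_column[OF K \<open>j < n\<close> \<open>j \<notin> K\<close>]
        by (rule not_cols_indep_zero_column)
      then show False using T(2) by contradiction
    qed
  qed
  then have "card T \<le> card (S \<inter> K)"
    using T(1) \<open>finite S\<close> by (intro card_mono) auto
  then show "col_rank k G S \<le> card (S \<inter> K)"
    using T(3) by simp
  have "cols_indep k G (S \<inter> K)"
  proof (rule cols_indep_if_isolating_combinations)
    show "finite (S \<inter> K)" using \<open>finite S\<close> by simp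
    fix j0 assume "j0 \<in> S \<inter> K"
    then obtain c where "\<forall>j<n. (\<Sum>i<k. c i * G i j) = (if j = j0 then 1 else 0)"
      using row_space_subcube_unit_vector[OF K] by blast
    then show "\<exists>c. \<forall>j\<in>S \<inter> K. (\<Sum>i<k. c i * G i j) = (if j = j0 then 1 else 0)"
      using S by blast
  qed
  then show "card (S \<inter> K) \<le> col_rank k G S"
    using \<open>finite S\<close> by (intro card_le_col_rank) auto
qed

lemma card_insert_Diff_lessThan:
  fixes n :: nat
  assumes "S \<subseteq> {..<n}"
  shows "card (insert n S - K) = (if n \<in> K then card (S - K) else Suc (card (S - K)))"
proof -
  have "finite S" using assms by (rule finite_subset) simp
  moreover have "n \<notin> S" using assms by blast
  ultimately show ?thesis by (simp add: insert_Diff_if)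
qed

lemma subset_expect_power_card_Diff:
  "subset_expect n lam (\<lambda>S. x ^ card (S - K)) = (1 - lam + lam * x) ^ card ({..<n} - K)"
proof (induction n)
  case 0
  then show ?case by (simp add: subset_expect_def)
next
  case (Suc n)
  have "subset_expect n lam (\<lambda>S. x ^ card (insert n S - K))
      = (if n \<in> K then 1 else x) * subset_expect n lam (\<lambda>S. x ^ card (S - K))"
    unfolding subset_expect_cmult[symmetric]
    by (rule subset_expect_cong) (simp add: card_insert_Diff_lessThan)
  then show ?case
    unfolding subset_expect_Suc Suc.IH lessThan_Suc
    by (simp add: card_insert_Diff_lessThan algebra_simps)
qed

lemma subset_expect_card_Diff:
  "subset_expect n lam (\<lambda>S. real (card (S - K))) = lam * card ({..<n} - K)"
proof (induction n)
  case 0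
  then show ?case by (simp add: subset_expect_def)
next
  case (Suc n)
  have "subset_expect n lam (\<lambda>S. real (card (insert n S - K)))
      = subset_expect n lam (\<lambda>S. real (card (S - K)) + (if n \<in> K then 0 else 1))"
    by (rule subset_expect_cong) (simp add: card_insert_Diff_lessThan)
  then show ?case
    unfolding subset_expect_Suc Suc.IH lessThan_Suc subset_expect_add subset_expect_const
    by (simp add: card_insert_Diff_lessThan algebra_simps)
qed

lemma log_subset_expect_powr_le:
  assumes "0 \<le> p" "p \<le> 1" "unit_increments n f"
  shows "log 2 (subset_expect n p (\<lambda>S. 2 powr f S)) \<le> subset_expect n (log 2 (1 + p)) f"
proof -
  have "0 < subset_expect n p (\<lambda>S. 2 powr f S)"
    using assms(1,2) by (intro subset_expect_pos) auto
  then show ?thesis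
    using subset_expect_powr_le[OF assms] by (simp add: log_le_iff)
qed

lemma log_subset_expect_powr_card_Diff:
  assumes "0 \<le> p"
  shows "log 2 (subset_expect n p (\<lambda>S. 2 powr real (card (S - K))))
    = subset_expect n (log 2 (1 + p)) (\<lambda>S. real (card (S - K)))"
proof -
  have "subset_expect n p (\<lambda>S. 2 powr real (card (S - K))) = (1 + p) ^ card ({..<n} - K)"
    unfolding powr_realpow[OF zero_less_numeral] subset_expect_power_card_Diff
    by (simp add: algebra_simps)
  then show ?thesis
    using assms by (simp add: subset_expect_card_Diff log_nat_power)
qed

lemma nullity_subcube:
  assumes "row_space k n G = subcube K" "S \<subseteq> {..<n}"
  shows "real (card S) - real (col_rank k G S) = real (card (S - K))"
proof -
  have "finite S" using assms(2) by (rule finite_subset) simp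
  then have "card S = card (S \<inter> K) + card (S - K)" by (rule card_Int_Diff)
  then show ?thesis using col_rank_subcube[OF assms] by simp
qed

theorem proposition1p3:
  fixes n k :: nat and G :: "nat \<Rightarrow> nat \<Rightarrow> bit" and p :: real
  assumes "0 \<le> p" and "p \<le> 1"
  defines "t \<equiv> log 2 (1 + p)"
  shows "log 2 (subset_expect n p (\<lambda>S. 2 powr (real (card S) - real (col_rank k G S))))
           \<le> subset_expect n t (\<lambda>T. real (card T) - real (col_rank k G T))
         \<and> ((\<exists>K. K \<subseteq> {..<n} \<and> row_space k n G = subcube K) \<longrightarrow>
            log 2 (subset_expect n p (\<lambda>S. 2 powr (real (card S) - real (col_rank k G S))))
              = subset_expect n t (\<lambda>T. real (card T) - real (col_rank k G T)))"
proof -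
  let ?f = "\<lambda>S. real (card S) - real (col_rank k G S)"
  have "log 2 (subset_expect n p (\<lambda>S. 2 powr ?f S)) \<le> subset_expect n t ?f"
    unfolding t_def using assms(1,2) unit_increments_nullity by (rule log_subset_expect_powr_le)
  moreover have "log 2 (subset_expect n p (\<lambda>S. 2 powr ?f S)) = subset_expect n t ?f"
    if "row_space k n G = subcube K" for K
  proof -
    have "subset_expect n p (\<lambda>S. 2 powr ?f S) = subset_expect n p (\<lambda>S. 2 powr real (card (S - K)))"
      and "subset_expect n t ?f = subset_expect n t (\<lambda>S. real (card (S - K)))"
      using nullity_subcube[OF that] by (auto intro: subset_expect_cong)
    then show ?thesis
      unfolding t_def using log_subset_expect_powr_card_Diff[OF assms(1)] by simp
  qed
  ultimately show ?thesis by blast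
qed

end
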